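(* Fix $\tau>0$ and real numbers $V_r,V_b$. The function $\tilde h:\mathcal S^\circ\to\mathbb R$, $$\tilde h(r,b)=r(\log r-1)+b(\log b-1)+rV_r+bV_b+\frac{\bar\alpha}{2}(r^2+2rb+b^2)+\tau(1-\bar\gamma\rho)(\log(1-\bar\gamma\rho)-1),\quad\rho=r+b,$$ is strictly convex and belongs to $C^2(\mathcal S^\circ)$. Its gradient $\tilde h':\mathcal S^\circ\to\mathbb R^2$ is invertible (a bijection onto $\mathbb R^2$), and the inverse of its Hessian $\tilde h''$ is uniformly bounded on $\mathcal S^\circ$.
   Context: $\epsilon>0$, $d\in\{2,3\}$, $\bar\alpha=\epsilon^d\,2(d-1)\pi/d$, $\bar\gamma=\epsilon^d\pi/d$. $\mathcal S=\{(r,b)\in\mathbb R^2: r\ge0,\ b\ge0,\ r+b\le1/\bar\gamma\}$ with interior $\mathcal S^\circ$. *)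

theory Defs
  imports "HOL-Analysis.Analysis"
begin

definition strict_convex_on :: "'a::real_vector set \<Rightarrow> ('a \<Rightarrow> real) \<Rightarrow> bool" where
  "strict_convex_on S f \<longleftrightarrow> convex S \<and>
     (\<forall>x\<in>S. \<forall>y\<in>S. \<forall>t::real. x \<noteq> y \<and> 0 < t \<and> t < 1 \<longrightarrow>
        f (t *\<^sub>R x + (1 - t) *\<^sub>R y) < t * f x + (1 - t) * f y)"

definition alpha_bar :: "real \<Rightarrow> nat \<Rightarrow> real" where
  "alpha_bar \<epsilon> d = \<epsilon> ^ d * (2 * (real d - 1) * pi / real d)"

definition gamma_bar :: "real \<Rightarrow> nat \<Rightarrow> real" where
  "gamma_bar \<epsilon> d = \<epsilon> ^ d * pi / real d"

definition S_set :: "real \<Rightarrow> nat \<Rightarrow> (real \<times> real) set" where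
  "S_set \<epsilon> d = {(r, b). r \<ge> 0 \<and> b \<ge> 0 \<and> r + b \<le> 1 / gamma_bar \<epsilon> d}"

definition h_tilde :: "real \<Rightarrow> nat \<Rightarrow> real \<Rightarrow> real \<Rightarrow> real \<Rightarrow> real \<times> real \<Rightarrow> real" where
  "h_tilde \<epsilon> d \<tau> Vr Vb = (\<lambda>(r, b).
     let \<rho> = r + b in
       r * (ln r - 1) + b * (ln b - 1) + r * Vr + b * Vb
       + alpha_bar \<epsilon> d / 2 * (r\<^sup>2 + 2 * r * b + b\<^sup>2)
       + \<tau> * (1 - gamma_bar \<epsilon> d * \<rho>) * (ln (1 - gamma_bar \<epsilon> d * \<rho>) - 1))"

end

theory Submission
  imports Defs "HOL-Real_Asymp.Real_Asymp"
begin

text \<open>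
  The energy is the sum of the entropies \<open>r (ln r - 1)\<close> and \<open>b (ln b - 1)\<close>, which are strictly
  convex, a linear term, and a convex function \<open>psi\<close> of the total density \<open>\<rho> = r + b\<close>. Hence it
  lies strictly above its tangent planes; this gives strict convexity and, applied at two points
  with the same gradient, injectivity of the gradient. A gradient value \<open>(p, q)\<close> is attained by
  splitting \<open>\<rho>\<close> in the ratio \<open>exp (p - Vr) : exp (q - Vb)\<close>, where \<open>\<rho>\<close> solves
  \<open>ln \<rho> + dpsi \<rho> = ln (exp (p - Vr) + exp (q - Vb))\<close>; this is possible because the left side
  runs from \<open>-\<infinity>\<close> to \<open>\<infinity>\<close> on \<open>(0, 1/c)\<close>. The Hessian is \<open>diag (1/r, 1/b)\<close> plus
  \<open>d2psi \<rho> \<ge> 0\<close> times the all-ones matrix, and every entry of its inverse is at most \<open>r + b < 1/c\<close>.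
\<close>

lemma DERIV_strict_mono_above_tangent:
  fixes f f' :: "real \<Rightarrow> real"
  assumes A: "connected A"
    and f': "\<And>x. x \<in> A \<Longrightarrow> (f has_real_derivative f' x) (at x)"
    and mono: "\<And>x y. x \<in> A \<Longrightarrow> y \<in> A \<Longrightarrow> x < y \<Longrightarrow> f' x < f' y"
    and x: "x \<in> A" and z: "z \<in> A" and "x \<noteq> z"
  shows "f z + f' z * (x - z) < f x"
proof (cases "x < z")
  case True
  with A x z have "{x..z} \<subseteq> A"
    using connected_contains_Icc by blast
  with True obtain \<xi> where \<xi>: "x < \<xi>" "\<xi> < z" "f z - f x = (z - x) * f' \<xi>"
    using MVT2[of x z f f'] f' by (meson atLeastAtMost_iff subsetD)
  with \<open>{x..z} \<subseteq> A\<close> z have "f' \<xi> < f' z"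
    by (intro mono) auto
  with True have "(z - x) * f' \<xi> < (z - x) * f' z"
    by (intro mult_strict_left_mono) auto
  with \<xi>(3) show ?thesis
    by (simp add: algebra_simps)
next
  case False
  with \<open>x \<noteq> z\<close> have "z < x" by simp
  with A x z have "{z..x} \<subseteq> A"
    using connected_contains_Icc by blast
  with \<open>z < x\<close> obtain \<xi> where \<xi>: "z < \<xi>" "\<xi> < x" "f x - f z = (x - z) * f' \<xi>"
    using MVT2[of z x f f'] f' by (meson atLeastAtMost_iff subsetD)
  with \<open>{z..x} \<subseteq> A\<close> z have "f' z < f' \<xi>"
    by (intro mono) auto
  with \<open>z < x\<close> have "(x - z) * f' z < (x - z) * f' \<xi>"
    by (intro mult_strict_left_mono) auto
  with \<xi>(3) show ?thesis
    by (simp add: algebra_simps)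
qed

lemma strict_convex_on_if_above_tangent:
  fixes f :: "'a::real_inner \<Rightarrow> real"
  assumes "convex S"
    and tangent: "\<And>x z. x \<in> S \<Longrightarrow> z \<in> S \<Longrightarrow> x \<noteq> z \<Longrightarrow> f z + g z \<bullet> (x - z) < f x"
  shows "strict_convex_on S f"
  unfolding strict_convex_on_def
proof (intro conjI ballI allI impI)
  fix x y and t :: real assume x: "x \<in> S" and y: "y \<in> S" and "x \<noteq> y \<and> 0 < t \<and> t < 1"
  then have "x \<noteq> y" and t: "0 < t" "t < 1" by auto
  define w where "w = t *\<^sub>R x + (1 - t) *\<^sub>R y"
  have w: "w \<in> S"
    using \<open>convex S\<close> x y t by (simp add: w_def convexD)
  have "x - w = (1 - t) *\<^sub>R (x - y)" "y - w = - t *\<^sub>R (x - y)"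
    by (simp_all add: w_def algebra_simps)
  with \<open>x \<noteq> y\<close> t have "x \<noteq> w" "y \<noteq> w"
    by auto
  have "t * (g w \<bullet> (x - w)) + (1 - t) * (g w \<bullet> (y - w)) = 0"
    by (simp add: \<open>x - w = _\<close> \<open>y - w = _\<close> algebra_simps)
  moreover have "t * (f w + g w \<bullet> (x - w)) < t * f x"
    using tangent[OF x w \<open>x \<noteq> w\<close>] t by simp
  moreover have "(1 - t) * (f w + g w \<bullet> (y - w)) < (1 - t) * f y"
    using tangent[OF y w \<open>y \<noteq> w\<close>] t by simp
  ultimately show "f w < t * f x + (1 - t) * f y"
    by (simp add: algebra_simps)
qed (fact \<open>convex S\<close>)

lemma inj_on_gradient_if_above_tangent:
  fixes f :: "'a::real_inner \<Rightarrow> real"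
  assumes tangent: "\<And>x z. x \<in> S \<Longrightarrow> z \<in> S \<Longrightarrow> x \<noteq> z \<Longrightarrow> f z + g z \<bullet> (x - z) < f x"
  shows "inj_on g S"
proof (rule inj_onI, rule ccontr)
  fix x z assume "x \<in> S" "z \<in> S" "g x = g z" "x \<noteq> z"
  then have "f z + g z \<bullet> (x - z) < f x" "f x + g z \<bullet> (z - x) < f z"
    using tangent by metis+
  moreover have "g z \<bullet> (z - x) = - (g z \<bullet> (x - z))"
    by (simp add: inner_diff_right)
  ultimately show False
    by linarith
qed

definition blinfun_sym2 :: "real \<Rightarrow> real \<Rightarrow> real \<Rightarrow> (real \<times> real) \<Rightarrow>\<^sub>L (real \<times> real)" where
  "blinfun_sym2 p q s = Blinfun (\<lambda>v. (p * fst v + q * snd v, q * fst v + s * snd v))"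

lemma blinfun_sym2_apply [simp]:
  "blinfun_apply (blinfun_sym2 p q s) v = (p * fst v + q * snd v, q * fst v + s * snd v)"
  unfolding blinfun_sym2_def
  by (subst bounded_linear_Blinfun_apply)
    (auto intro!: bounded_linear_intros)

lemma blinfun_sym2_decompose:
  "blinfun_sym2 p q s = p *\<^sub>R blinfun_sym2 1 0 0 + q *\<^sub>R blinfun_sym2 0 1 0 + s *\<^sub>R blinfun_sym2 0 0 1"
  by (rule blinfun_eqI) (simp add: blinfun.add_left blinfun.scaleR_left algebra_simps)

lemma continuous_on_blinfun_sym2 [continuous_intros]:
  assumes "continuous_on S p" "continuous_on S q" "continuous_on S s"
  shows "continuous_on S (\<lambda>x. blinfun_sym2 (p x) (q x) (s x))"
  by (subst blinfun_sym2_decompose) (intro continuous_intros assms)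

lemma blinfun_sym2_inverse:
  assumes "p * s - q\<^sup>2 = \<delta>" "\<delta> \<noteq> 0"
  shows "blinfun_sym2 (s / \<delta>) (- q / \<delta>) (p / \<delta>) o\<^sub>L blinfun_sym2 p q s = id_blinfun"
    and "blinfun_sym2 p q s o\<^sub>L blinfun_sym2 (s / \<delta>) (- q / \<delta>) (p / \<delta>) = id_blinfun"
  using assms by (auto intro!: blinfun_eqI simp: field_simps power2_eq_square)

lemma norm_blinfun_sym2_le: "norm (blinfun_sym2 p q s) \<le> \<bar>p\<bar> + 2 * \<bar>q\<bar> + \<bar>s\<bar>"
proof (rule norm_blinfun_bound)
  fix v :: "real \<times> real"
  have u: "\<bar>fst v\<bar> \<le> norm v" and w: "\<bar>snd v\<bar> \<le> norm v"
    by (metis norm_fst_le prod.collapse real_norm_def, metis norm_snd_le prod.collapse real_norm_def)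
  have "norm (blinfun_sym2 p q s v) \<le> \<bar>p * fst v + q * snd v\<bar> + \<bar>q * fst v + s * snd v\<bar>"
    unfolding blinfun_sym2_apply by (metis norm_Pair_le real_norm_def)
  also have "\<dots> \<le> \<bar>p\<bar> * \<bar>fst v\<bar> + \<bar>q\<bar> * \<bar>snd v\<bar> + (\<bar>q\<bar> * \<bar>fst v\<bar> + \<bar>s\<bar> * \<bar>snd v\<bar>)"
    by (intro add_mono) (simp_all add: abs_triangle_ineq[THEN order_trans] abs_mult)
  also have "\<dots> \<le> \<bar>p\<bar> * norm v + \<bar>q\<bar> * norm v + (\<bar>q\<bar> * norm v + \<bar>s\<bar> * norm v)"
    using u w by (intro add_mono mult_left_mono) simp_all
  also have "\<dots> = (\<bar>p\<bar> + 2 * \<bar>q\<bar> + \<bar>s\<bar>) * norm v"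
    by (simp add: algebra_simps)
  finally show "norm (blinfun_sym2 p q s v) \<le> (\<bar>p\<bar> + 2 * \<bar>q\<bar> + \<bar>s\<bar>) * norm v" .
qed simp

lemma inverse_diag_plus_const_bounds:
  fixes r b k :: real
  assumes r: "0 < r" and b: "0 < b" and k: "0 \<le> k"
  defines "\<delta> \<equiv> (1 / r + k) * (1 / b + k) - k\<^sup>2"
  shows "0 < \<delta>" "\<bar>(1 / b + k) / \<delta>\<bar> \<le> r + b" "\<bar>k / \<delta>\<bar> \<le> r + b" "\<bar>(1 / r + k) / \<delta>\<bar> \<le> r + b"
proof -
  define N where "N = 1 + k * (r + b)"
  have N: "0 < N"
    using r b k by (simp add: N_def add_pos_nonneg)
  have \<delta>: "\<delta> = N / (r * b)"
    using r b by (simp add: \<delta>_def N_def field_simps power2_eq_square)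
  then show "0 < \<delta>"
    using N r b by simp
  have "(1 / b + k) / \<delta> = r * (1 + k * b) / N"
    using r b N by (simp add: \<delta> field_simps)
  also have "\<dots> \<le> r"
    using r b k unfolding pos_divide_le_eq[OF N] by (simp add: N_def algebra_simps)
  finally show "\<bar>(1 / b + k) / \<delta>\<bar> \<le> r + b"
    using r b k N \<open>0 < \<delta>\<close> by simp
  have "k / \<delta> = k * r * b / N"
    using r b N by (simp add: \<delta> field_simps)
  also have "\<dots> \<le> r"
    using r b k unfolding pos_divide_le_eq[OF N] by (simp add: N_def algebra_simps)
  finally show "\<bar>k / \<delta>\<bar> \<le> r + b"
    using r b k N \<open>0 < \<delta>\<close> by simp
  have "(1 / r + k) / \<delta> = b * (1 + k * r) / N"
    using r b N by (simp add: \<delta> field_simps)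
  also have "\<dots> \<le> b"
    using r b k unfolding pos_divide_le_eq[OF N] by (simp add: N_def algebra_simps)
  finally show "\<bar>(1 / r + k) / \<delta>\<bar> \<le> r + b"
    using r b k N \<open>0 < \<delta>\<close> by simp
qed

definition entropy :: "real \<Rightarrow> real" where
  "entropy u = u * (ln u - 1)"

lemma entropy_has_real_derivative: "0 < u \<Longrightarrow> (entropy has_real_derivative ln u) (at u)"
  unfolding entropy_def by (rule derivative_eq_intros refl | simp)+

lemma entropy_above_tangent:
  "0 < x \<Longrightarrow> 0 < z \<Longrightarrow> x \<noteq> z \<Longrightarrow> entropy z + ln z * (x - z) < entropy x"
  by (rule DERIV_strict_mono_above_tangent[where A = "{0<..}"])
    (auto intro: entropy_has_real_derivative)

locale mixture_free_energy =
  fixes a c \<tau> Vr Vb :: real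
  assumes a: "0 \<le> a" and c: "0 < c" and \<tau>: "0 < \<tau>"
begin

definition triangle :: "(real \<times> real) set" where
  "triangle = {z. 0 < fst z \<and> 0 < snd z \<and> c * (fst z + snd z) < 1}"

definition psi :: "real \<Rightarrow> real" where
  "psi \<rho> = a / 2 * \<rho>\<^sup>2 + \<tau> * entropy (1 - c * \<rho>)"

definition dpsi :: "real \<Rightarrow> real" where
  "dpsi \<rho> = a * \<rho> - \<tau> * c * ln (1 - c * \<rho>)"

definition d2psi :: "real \<Rightarrow> real" where
  "d2psi \<rho> = a + \<tau> * c\<^sup>2 / (1 - c * \<rho>)"

definition energy :: "real \<times> real \<Rightarrow> real" where
  "energy z = entropy (fst z) + entropy (snd z) + fst z * Vr + snd z * Vb + psi (fst z + snd z)"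

definition grad :: "real \<times> real \<Rightarrow> real \<times> real" where
  "grad z = (ln (fst z) + Vr + dpsi (fst z + snd z), ln (snd z) + Vb + dpsi (fst z + snd z))"

definition hess :: "real \<times> real \<Rightarrow> (real \<times> real) \<Rightarrow>\<^sub>L (real \<times> real)" where
  "hess z = blinfun_sym2 (1 / fst z + d2psi (fst z + snd z)) (d2psi (fst z + snd z))
     (1 / snd z + d2psi (fst z + snd z))"

lemma psi_has_real_derivative: "c * \<rho> < 1 \<Longrightarrow> (psi has_real_derivative dpsi \<rho>) (at \<rho>)"
  unfolding psi_def dpsi_def entropy_def
  by (rule derivative_eq_intros refl | simp)+ (simp add: field_simps)

lemma dpsi_has_real_derivative: "c * \<rho> < 1 \<Longrightarrow> (dpsi has_real_derivative d2psi \<rho>) (at \<rho>)"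
  unfolding dpsi_def d2psi_def
  by (rule derivative_eq_intros refl | simp)+ (simp add: field_simps power2_eq_square)

lemma dpsi_strict_mono:
  assumes "x < y" "c * y < 1"
  shows "dpsi x < dpsi y"
proof -
  from assms c have "c * x < c * y"
    by simp
  with \<open>c * y < 1\<close> have "ln (1 - c * y) < ln (1 - c * x)"
    by (subst ln_less_cancel_iff) auto
  with c \<tau> have "\<tau> * c * ln (1 - c * y) < \<tau> * c * ln (1 - c * x)"
    by simp
  moreover have "a * x \<le> a * y"
    using a \<open>x < y\<close> by (simp add: mult_left_mono)
  ultimately show ?thesis
    unfolding dpsi_def by linarith
qed

lemma psi_above_tangent:
  assumes "c * x < 1" "c * \<rho> < 1"
  shows "psi \<rho> + dpsi \<rho> * (x - \<rho>) \<le> psi x"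
proof (cases "x = \<rho>")
  case False
  have "c * u < 1 \<longleftrightarrow> u \<in> {..<1/c}" for u
    using c by (simp add: field_simps)
  with assms False show ?thesis
    by (intro less_imp_le DERIV_strict_mono_above_tangent[where A = "{..<1/c}"])
      (auto intro: psi_has_real_derivative dpsi_strict_mono)
qed simp

lemma triangle_iff: "z \<in> triangle \<longleftrightarrow> 0 < fst z \<and> 0 < snd z \<and> c * (fst z + snd z) < 1"
  by (simp add: triangle_def)

lemma convex_triangle: "convex triangle"
proof -
  have "triangle = {z. (1, 0) \<bullet> z > 0} \<inter> {z. (0, 1) \<bullet> z > 0} \<inter> {z. (c, c) \<bullet> z < 1}"
    by (auto simp: triangle_def inner_prod_def algebra_simps)
  then show ?thesis
    by (simp add: convex_Int convex_halfspace_gt convex_halfspace_lt)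
qed

lemma energy_above_tangent:
  assumes x: "x \<in> triangle" and z: "z \<in> triangle" and "x \<noteq> z"
  shows "energy z + grad z \<bullet> (x - z) < energy x"
proof -
  have ent: "entropy (fst z) + ln (fst z) * (fst x - fst z) \<le> entropy (fst x)"
    "entropy (snd z) + ln (snd z) * (snd x - snd z) \<le> entropy (snd x)"
    using entropy_above_tangent x z by (fastforce simp: triangle_iff)+
  have "entropy (fst z) + ln (fst z) * (fst x - fst z) < entropy (fst x)
      \<or> entropy (snd z) + ln (snd z) * (snd x - snd z) < entropy (snd x)"
    using entropy_above_tangent x z \<open>x \<noteq> z\<close> by (auto simp: triangle_iff prod_eq_iff)
  moreover have "psi (fst z + snd z) + dpsi (fst z + snd z) * (fst x + snd x - (fst z + snd z))
      \<le> psi (fst x + snd x)"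
    using psi_above_tangent x z by (simp add: triangle_iff)
  moreover have "energy z + grad z \<bullet> (x - z)
      = (entropy (fst z) + ln (fst z) * (fst x - fst z)) + (entropy (snd z) + ln (snd z) * (snd x - snd z))
        + fst x * Vr + snd x * Vb
        + (psi (fst z + snd z) + dpsi (fst z + snd z) * (fst x + snd x - (fst z + snd z)))"
    by (simp add: energy_def grad_def inner_prod_def algebra_simps)
  ultimately show ?thesis
    using ent by (simp add: energy_def) linarith
qed

lemma strict_convex_on_energy: "strict_convex_on triangle energy"
  using convex_triangle energy_above_tangent by (rule strict_convex_on_if_above_tangent)

lemma inj_on_grad: "inj_on grad triangle"
  using energy_above_tangent by (rule inj_on_gradient_if_above_tangent)

lemma energy_has_derivative:
  assumes "z \<in> triangle"
  shows "(energy has_derivative (\<lambda>v. grad z \<bullet> v)) (at z)"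
proof -
  have pos: "0 < fst z" "0 < snd z" "c * (fst z + snd z) < 1"
    using assms by (simp_all add: triangle_iff)
  have fst: "(fst has_derivative fst) (at z)" and snd: "(snd has_derivative snd) (at z)"
    by (simp_all add: bounded_linear_imp_has_derivative bounded_linear_fst bounded_linear_snd)
  have "(energy has_derivative (\<lambda>v. fst v * ln (fst z) + snd v * ln (snd z) + fst v * Vr + snd v * Vb
      + (fst v + snd v) * dpsi (fst z + snd z))) (at z)"
    unfolding energy_def[abs_def]
    by (intro has_derivative_add has_derivative_mult_left fst snd
        DERIV_compose_FDERIV[OF entropy_has_real_derivative] DERIV_compose_FDERIV[OF psi_has_real_derivative] pos)
  moreover have "(\<lambda>v. fst v * ln (fst z) + snd v * ln (snd z) + fst v * Vr + snd v * Vb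
      + (fst v + snd v) * dpsi (fst z + snd z)) = (\<lambda>v. grad z \<bullet> v)"
    by (auto simp: grad_def inner_prod_def algebra_simps)
  ultimately show ?thesis
    by simp
qed

lemma grad_has_derivative:
  assumes "z \<in> triangle"
  shows "(grad has_derivative blinfun_apply (hess z)) (at z)"
proof -
  have pos: "0 < fst z" "0 < snd z" "c * (fst z + snd z) < 1"
    using assms by (simp_all add: triangle_iff)
  have fst: "(fst has_derivative fst) (at z)" and snd: "(snd has_derivative snd) (at z)"
    by (simp_all add: bounded_linear_imp_has_derivative bounded_linear_fst bounded_linear_snd)
  let ?k = "d2psi (fst z + snd z)"
  have "(grad has_derivative (\<lambda>v. (fst v * (1 / fst z) + 0 + (fst v + snd v) * ?k,
      snd v * (1 / snd z) + 0 + (fst v + snd v) * ?k))) (at z)"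
    unfolding grad_def[abs_def]
    by (intro has_derivative_Pair has_derivative_add has_derivative_const fst snd
        DERIV_compose_FDERIV[OF DERIV_ln_divide] DERIV_compose_FDERIV[OF dpsi_has_real_derivative] pos)
  moreover have "(\<lambda>v. (fst v * (1 / fst z) + 0 + (fst v + snd v) * ?k,
      snd v * (1 / snd z) + 0 + (fst v + snd v) * ?k)) = blinfun_apply (hess z)"
    by (auto simp: hess_def algebra_simps)
  ultimately show ?thesis
    by simp
qed

lemma continuous_on_hess: "continuous_on triangle hess"
  unfolding hess_def d2psi_def
  by (intro continuous_intros) (auto simp: triangle_iff)

lemma exists_total_density: "\<exists>\<rho>. 0 < \<rho> \<and> c * \<rho> < 1 \<and> ln \<rho> + dpsi \<rho> = L"
proof -
  let ?k = "\<lambda>\<rho>. ln \<rho> + dpsi \<rho>"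
  have "filterlim ?k at_bot (at_right 0)"
    unfolding dpsi_def by real_asymp
  then have "eventually (\<lambda>\<rho>. ?k \<rho> < L) (at_right 0)"
    by (simp add: filterlim_at_bot_dense)
  moreover have "eventually (\<lambda>\<rho>. \<rho> \<in> {0<..<1 / (2 * c)}) (at_right 0)"
    using c by (intro eventually_at_right_real) simp
  ultimately have "eventually (\<lambda>\<rho>. ?k \<rho> < L \<and> \<rho> \<in> {0<..<1 / (2 * c)}) (at_right 0)"
    by (rule eventually_conj)
  then obtain lo where lo: "0 < lo" "lo < 1 / (2 * c)" "?k lo < L"
    using eventually_happens'[OF trivial_limit_at_right_real] by auto
  have "filterlim ?k at_top (at_left (1 / c))"
    unfolding dpsi_def using c \<tau> by real_asymp
  then have "eventually (\<lambda>\<rho>. L < ?k \<rho>) (at_left (1 / c))"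
    by (simp add: filterlim_at_top_dense)
  moreover have "eventually (\<lambda>\<rho>. \<rho> \<in> {1 / (2 * c)<..<1 / c}) (at_left (1 / c))"
    using c by (intro eventually_at_left_real) (simp add: field_simps)
  ultimately have "eventually (\<lambda>\<rho>. L < ?k \<rho> \<and> \<rho> \<in> {1 / (2 * c)<..<1 / c}) (at_left (1 / c))"
    by (rule eventually_conj)
  then obtain hi where hi: "1 / (2 * c) < hi" "hi < 1 / c" "L < ?k hi"
    using eventually_happens'[OF trivial_limit_at_left_real] by auto
  have inside: "0 < x \<and> c * x < 1" if "x \<in> {lo..hi}" for x
  proof -
    from that c have "c * x \<le> c * hi"
      by simp
    also from hi(2) c have "c * hi < 1"
      by (simp add: field_simps)
    finally show ?thesis
      using that lo(1) by simp
  qed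
  then have "continuous_on {lo..hi} ?k"
    unfolding dpsi_def by (intro continuous_intros) force+
  then obtain \<rho> where "\<rho> \<in> {lo..hi}" "?k \<rho> = L"
    using IVT'[of ?k lo L hi] lo hi by auto
  with inside show ?thesis
    by blast
qed

lemma grad_image_triangle_eq_UNIV: "grad ` triangle = UNIV"
proof -
  have "(p, q) \<in> grad ` triangle" for p q
  proof -
    define P Q where "P = exp (p - Vr)" and "Q = exp (q - Vb)"
    have PQ: "0 < P" "0 < Q"
      by (simp_all add: P_def Q_def)
    obtain \<rho> where \<rho>: "0 < \<rho>" "c * \<rho> < 1" "ln \<rho> + dpsi \<rho> = ln (P + Q)"
      using exists_total_density by blast
    define r b where "r = \<rho> * P / (P + Q)" and "b = \<rho> * Q / (P + Q)"
    have "r + b = \<rho> * (P + Q) / (P + Q)"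
      by (simp add: r_def b_def add_divide_distrib distrib_left)
    with PQ have rb: "r + b = \<rho>"
      by simp
    have "ln P = p - Vr" "ln Q = q - Vb"
      by (simp_all add: P_def Q_def)
    with PQ \<rho> have "ln r = ln \<rho> + (p - Vr) - ln (P + Q)" "ln b = ln \<rho> + (q - Vb) - ln (P + Q)"
      by (simp_all add: r_def b_def ln_mult ln_div add_pos_pos)
    with \<rho>(3) have "ln r + Vr + dpsi \<rho> = p" "ln b + Vb + dpsi \<rho> = q"
      by simp_all
    with rb have "grad (r, b) = (p, q)"
      by (simp add: grad_def)
    moreover have "(r, b) \<in> triangle"
      using PQ \<rho> rb by (simp add: triangle_iff r_def b_def)
    ultimately show ?thesis
      by (metis image_eqI)
  qed
  then show ?thesis
    by auto
qed

lemma hess_invertible_bounded: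
  assumes "z \<in> triangle"
  shows "\<exists>Hi. Hi o\<^sub>L hess z = id_blinfun \<and> hess z o\<^sub>L Hi = id_blinfun \<and> norm Hi \<le> 4 / c"
proof -
  define r b k where "r = fst z" and "b = snd z" and "k = d2psi (r + b)"
  have rb: "0 < r" "0 < b" "c * (r + b) < 1"
    using assms by (simp_all add: triangle_iff r_def b_def)
  have k: "0 \<le> k"
    using rb a \<tau> by (simp add: k_def d2psi_def)
  define \<delta> where "\<delta> = (1 / r + k) * (1 / b + k) - k\<^sup>2"
  note bounds = inverse_diag_plus_const_bounds[OF rb(1,2) k, folded \<delta>_def]
  define Hi where "Hi = blinfun_sym2 ((1 / b + k) / \<delta>) (- k / \<delta>) ((1 / r + k) / \<delta>)"
  have H: "hess z = blinfun_sym2 (1 / r + k) k (1 / b + k)"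
    by (simp add: hess_def r_def b_def k_def)
  have "Hi o\<^sub>L hess z = id_blinfun" "hess z o\<^sub>L Hi = id_blinfun"
    unfolding H Hi_def using blinfun_sym2_inverse[OF \<delta>_def[symmetric]] bounds(1) by simp_all
  moreover have "norm Hi \<le> 4 * (r + b)"
    using norm_blinfun_sym2_le[of "(1 / b + k) / \<delta>" "- k / \<delta>" "(1 / r + k) / \<delta>"] bounds
    by (simp add: Hi_def)
  moreover have "4 * (r + b) \<le> 4 / c"
    using rb c by (simp add: field_simps)
  ultimately show ?thesis
    by force
qed

end

lemma interior_S_set:
  assumes "0 < gamma_bar \<epsilon> d"
  shows "interior (S_set \<epsilon> d) = {z. 0 < fst z \<and> 0 < snd z \<and> gamma_bar \<epsilon> d * (fst z + snd z) < 1}"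
proof -
  let ?c = "gamma_bar \<epsilon> d"
  have S: "S_set \<epsilon> d = {z. (1, 0) \<bullet> z \<ge> 0} \<inter> {z. (0, 1) \<bullet> z \<ge> 0} \<inter> {z. (?c, ?c) \<bullet> z \<le> 1}"
    using assms by (auto simp: S_set_def inner_prod_def field_simps)
  have "interior (S_set \<epsilon> d) = {z. (1, 0) \<bullet> z > 0} \<inter> {z. (0, 1) \<bullet> z > 0} \<inter> {z. (?c, ?c) \<bullet> z < 1}"
    using assms unfolding S interior_Int
    by (subst interior_halfspace_ge interior_halfspace_le, simp add: zero_prod_def)+ simp
  then show ?thesis
    by (auto simp: inner_prod_def algebra_simps)
qed

theorem lemma1:
  fixes \<epsilon> \<tau> Vr Vb :: real and d :: nat
  assumes "\<epsilon> > 0" and "d \<in> {2, 3}" and "\<tau> > 0"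
  shows "strict_convex_on (interior (S_set \<epsilon> d)) (h_tilde \<epsilon> d \<tau> Vr Vb)
       \<and> (\<exists>(g :: real \<times> real \<Rightarrow> real \<times> real) (H :: real \<times> real \<Rightarrow> ((real \<times> real) \<Rightarrow>\<^sub>L (real \<times> real))).
            (\<forall>x\<in>interior (S_set \<epsilon> d).
               (h_tilde \<epsilon> d \<tau> Vr Vb has_derivative (\<lambda>v. g x \<bullet> v)) (at x)
             \<and> (g has_derivative blinfun_apply (H x)) (at x))
          \<and> continuous_on (interior (S_set \<epsilon> d)) H
          \<and> bij_betw g (interior (S_set \<epsilon> d)) UNIV
          \<and> (\<exists>C. \<forall>x\<in>interior (S_set \<epsilon> d). \<exists>Hi.
               Hi o\<^sub>L H x = id_blinfun \<and> H x o\<^sub>L Hi = id_blinfun \<and> norm Hi \<le> C))"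
proof -
  interpret mixture_free_energy "alpha_bar \<epsilon> d" "gamma_bar \<epsilon> d" \<tau> Vr Vb
    using assms by unfold_locales (auto simp: alpha_bar_def gamma_bar_def)
  have T: "interior (S_set \<epsilon> d) = triangle"
    using interior_S_set c by (simp add: triangle_def)
  have h: "h_tilde \<epsilon> d \<tau> Vr Vb = energy"
    by (auto simp: fun_eq_iff h_tilde_def energy_def psi_def entropy_def power2_eq_square algebra_simps)
  show ?thesis
    unfolding T h bij_betw_def
    using strict_convex_on_energy energy_has_derivative grad_has_derivative continuous_on_hess
      inj_on_grad grad_image_triangle_eq_UNIV hess_invertible_bounded
    by blast
qed

end
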